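(* Let $\sigma>0$ be fixed and $z\in\mathbb{C}$. (i) If $|\Re z|\ge\sigma$, then $|e^z-1|\ge1-e^{-\sigma}$. (ii) Let $R=|z|$ and $\mathcal{J}=\bigcup_{m\in\mathbb{Z}}(2\pi m-\pi/2,\,2\pi m+\pi/2)$. Then for $z$ with $|\Re z|<\sigma$, $$|e^z-1|\ge|\sin R|\,\mathbf{1}_{\{R\in\mathcal{J}\}}+\mathbf{1}_{\{R\in\mathcal{J}^c\}}+O(1/R)\qquad\text{as }R\to\infty,$$ i.e. there are constants $C,R_0>0$ such that for all $z$ with $|\Re z|<\sigma$ and $R=|z|\ge R_0$, $|e^z-1|\ge|\sin R|\,\mathbf{1}_{\{R\in\mathcal{J}\}}+\mathbf{1}_{\{R\in\mathcal{J}^c\}}-C/R$.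
   Context: $\mathbf{1}_S$ denotes the indicator function of a set $S$. *)

theory Defs
  imports Complex_Main "HOL-Library.Indicator_Function"
begin

definition setJ :: "real set" where
  "setJ = (\<Union>m::int. {2 * pi * of_int m - pi / 2 <..< 2 * pi * of_int m + pi / 2})"

end

theory Submission
  imports Defs
begin

text \<open>Write \<open>z = x + iy\<close> and \<open>R = |z|\<close>. Far from the imaginary axis \<open>|e\<^sup>z - 1| \<ge> |e\<^sup>x - 1|\<close>
  suffices. Near it, \<open>|e\<^sup>z - 1|\<^sup>2 = (e\<^sup>x - cos y)\<^sup>2 + sin\<^sup>2 y\<close> shows that \<open>|e\<^sup>z - 1|\<close> dominates
  \<open>|sin y|\<close>, and also \<open>1\<close> whenever \<open>cos y \<le> 0\<close>. Since \<open>R - |y| = x\<^sup>2 / (R + |y|) = O(1/R)\<close> and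
  sine and cosine are 1-Lipschitz, \<open>y\<close> may be replaced by \<open>R\<close> at cost \<open>O(1/R)\<close>; outside \<open>J\<close>
  one has \<open>cos R \<le> 0\<close>.\<close>

lemma abs_sin_diff_le: "\<bar>sin a - sin b\<bar> \<le> \<bar>a - b\<bar>" for a b :: real
proof -
  have "\<bar>sin a - sin b\<bar> = 2 * \<bar>sin ((a - b) / 2)\<bar> * \<bar>cos ((a + b) / 2)\<bar>"
    by (simp add: sin_diff_sin abs_mult)
  also have "\<dots> \<le> 2 * \<bar>(a - b) / 2\<bar> * 1"
    by (intro mult_mono abs_sin_x_le_abs_x) (auto simp: abs_cos_le_one)
  finally show ?thesis by simp
qed

lemma abs_cos_diff_le: "\<bar>cos a - cos b\<bar> \<le> \<bar>a - b\<bar>" for a b :: real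
proof -
  have "\<bar>cos a - cos b\<bar> = 2 * \<bar>sin ((a + b) / 2)\<bar> * \<bar>sin ((b - a) / 2)\<bar>"
    by (simp add: cos_diff_cos abs_mult)
  also have "\<dots> \<le> 2 * 1 * \<bar>(b - a) / 2\<bar>"
    by (intro mult_mono abs_sin_x_le_abs_x) (auto simp: abs_sin_le_one)
  finally show ?thesis by simp
qed

lemma cos_pos_imp_in_setJ:
  assumes "cos R > 0"
  shows "R \<in> setJ"
proof -
  define m where "m = round (R / (2 * pi))"
  define t where "t = R - 2 * pi * of_int m"
  have "\<bar>t\<bar> = 2 * pi * \<bar>of_int m - R / (2 * pi)\<bar>"
    unfolding t_def by (simp add: abs_minus_commute field_simps flip: abs_mult[of "2 * pi"])
  also have "\<dots> \<le> 2 * pi * (1 / 2)"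
    unfolding m_def by (intro mult_left_mono of_int_round_abs_le) auto
  finally have t_le_pi: "\<bar>t\<bar> \<le> pi" by simp
  have cos_t: "cos \<bar>t\<bar> = cos R"
    unfolding t_def cos_abs_real by (simp add: cos_diff mult.assoc[symmetric])
  have "\<bar>t\<bar> < pi / 2"
  proof (rule ccontr)
    assume "\<not> \<bar>t\<bar> < pi / 2"
    then have "sin (\<bar>t\<bar> - pi / 2) \<ge> 0"
      using t_le_pi by (intro sin_ge_zero) auto
    moreover have "cos \<bar>t\<bar> = - sin (\<bar>t\<bar> - pi / 2)"
      by (simp add: sin_diff)
    ultimately show False
      using assms cos_t by linarith
  qed
  then have "- (pi / 2) < t" "t < pi / 2"
    by (simp_all add: abs_less_iff)
  then have "R \<in> {2 * pi * of_int m - pi / 2 <..< 2 * pi * of_int m + pi / 2}"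
    unfolding t_def by simp
  then show ?thesis
    unfolding setJ_def by blast
qed

lemma norm_exp_minus_one_squared:
  "(cmod (exp z - 1))\<^sup>2 = (exp (Re z) - cos (Im z))\<^sup>2 + (sin (Im z))\<^sup>2"
proof -
  have "(cmod (exp z - 1))\<^sup>2 = (exp (Re z) * cos (Im z) - 1)\<^sup>2 + (exp (Re z) * sin (Im z))\<^sup>2"
    by (simp add: cmod_def Re_exp Im_exp)
  also have "\<dots> = (exp (Re z))\<^sup>2 * ((sin (Im z))\<^sup>2 + (cos (Im z))\<^sup>2)
                   - 2 * exp (Re z) * cos (Im z) + 1"
    by algebra
  also have "\<dots> = (exp (Re z) - cos (Im z))\<^sup>2 + (sin (Im z))\<^sup>2"
    using sin_cos_squared_add[of "Im z"] by (simp add: power2_eq_square algebra_simps)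
  finally show ?thesis .
qed

lemma norm_exp_minus_one_ge_abs_sin_Im: "\<bar>sin (Im z)\<bar> \<le> cmod (exp z - 1)"
  by (rule power2_le_imp_le) (simp_all add: norm_exp_minus_one_squared)

lemma norm_exp_minus_one_ge_one_minus_cos_Im: "1 - max (cos (Im z)) 0 \<le> cmod (exp z - 1)"
proof (cases "cos (Im z) \<le> 0")
  case True
  then have "(- cos (Im z))\<^sup>2 \<le> (exp (Re z) - cos (Im z))\<^sup>2"
    using exp_gt_zero[of "Re z"] by (intro power_mono) auto
  then have "1 \<le> (cmod (exp z - 1))\<^sup>2"
    using sin_cos_squared_add[of "Im z"] unfolding norm_exp_minus_one_squared power2_minus by linarith
  then have "1 \<le> cmod (exp z - 1)"
    by (metis norm_ge_zero one_power2 power2_le_imp_le)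
  with True show ?thesis by simp
next
  case False
  let ?c = "cos (Im z)"
  have "(1 - ?c)\<^sup>2 \<le> (1 - ?c) * (1 + ?c)"
    using False cos_le_one[of "Im z"] by (simp add: power2_eq_square mult_left_mono)
  also have "\<dots> = \<bar>sin (Im z)\<bar>\<^sup>2"
    using sin_cos_squared_add[of "Im z"] by (simp add: power2_eq_square algebra_simps)
  finally have "1 - ?c \<le> \<bar>sin (Im z)\<bar>"
    by (rule power2_le_imp_le) simp
  with False norm_exp_minus_one_ge_abs_sin_Im[of z] show ?thesis by simp
qed

lemma cmod_minus_abs_Im_le:
  assumes "z \<noteq> 0"
  shows "cmod z - \<bar>Im z\<bar> \<le> (Re z)\<^sup>2 / cmod z"
proof -
  have gap_nonneg: "0 \<le> cmod z - \<bar>Im z\<bar>"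
    using abs_Im_le_cmod[of z] by simp
  have "(cmod z - \<bar>Im z\<bar>) * cmod z \<le> (cmod z - \<bar>Im z\<bar>) * (cmod z + \<bar>Im z\<bar>)"
    using gap_nonneg by (intro mult_left_mono) auto
  also have "\<dots> = (cmod z)\<^sup>2 - (Im z)\<^sup>2"
    by (simp add: power2_eq_square algebra_simps)
  also have "\<dots> = (Re z)\<^sup>2"
    by (simp add: cmod_power2)
  finally show ?thesis
    using assms by (simp add: field_simps)
qed

lemma norm_exp_minus_one_ge_setJ_bound:
  fixes z :: complex
  assumes "z \<noteq> 0"
  shows "\<bar>sin (cmod z)\<bar> * indicator setJ (cmod z) + indicator (- setJ) (cmod z)
           - (Re z)\<^sup>2 / cmod z \<le> cmod (exp z - 1)"
proof -
  define R where "R = cmod z"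
  define y where "y = \<bar>Im z\<bar>"
  have gap: "R - y \<le> (Re z)\<^sup>2 / R" "y \<le> R"
    using cmod_minus_abs_Im_le[OF assms] abs_Im_le_cmod[of z] by (simp_all add: R_def y_def)
  have sin_y: "\<bar>sin y\<bar> = \<bar>sin (Im z)\<bar>" and cos_y: "cos y = cos (Im z)"
    by (cases "Im z \<ge> 0") (simp_all add: y_def)
  show ?thesis
  proof (cases "R \<in> setJ")
    case True
    have "\<bar>sin R\<bar> \<le> \<bar>sin y\<bar> + (R - y)"
      using abs_sin_diff_le[of R y] gap by linarith
    with True gap sin_y norm_exp_minus_one_ge_abs_sin_Im[of z] show ?thesis
      by (simp add: R_def)
  next
    case False
    then have "cos R \<le> 0"
      using cos_pos_imp_in_setJ by force
    moreover have "cos y \<le> cos R + (R - y)"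
      using abs_cos_diff_le[of y R] gap by linarith
    ultimately have "max (cos (Im z)) 0 \<le> (Re z)\<^sup>2 / R"
      using gap cos_y by simp
    then have "1 - (Re z)\<^sup>2 / R \<le> cmod (exp z - 1)"
      using norm_exp_minus_one_ge_one_minus_cos_Im[of z] by linarith
    with False show ?thesis
      by (simp add: R_def)
  qed
qed

lemma abs_exp_minus_one_ge: "1 - exp (- \<bar>x\<bar>) \<le> \<bar>exp x - 1\<bar>" for x :: real
proof (cases "x \<ge> 0")
  case True
  have "1 - exp (- x) \<le> x" "x \<le> exp x - 1"
    using exp_ge_add_one_self[of "- x"] exp_ge_add_one_self[of x] by linarith+
  with True show ?thesis by simp
qed simp

lemma norm_exp_minus_one_ge_of_abs_Re:
  assumes "\<sigma> \<le> \<bar>Re z\<bar>"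
  shows "1 - exp (- \<sigma>) \<le> cmod (exp z - 1)"
proof -
  have "1 - exp (- \<sigma>) \<le> 1 - exp (- \<bar>Re z\<bar>)"
    using assms by simp
  also have "\<dots> \<le> \<bar>exp (Re z) - 1\<bar>"
    by (rule abs_exp_minus_one_ge)
  also have "\<dots> \<le> cmod (exp z - 1)"
    using norm_triangle_ineq3[of "exp z" 1] by (simp add: norm_exp_eq_Re)
  finally show ?thesis .
qed

theorem lemmaA1:
  fixes \<sigma> :: real
  assumes "\<sigma> > 0"
  shows "(\<forall>z::complex. \<bar>Re z\<bar> \<ge> \<sigma> \<longrightarrow> cmod (exp z - 1) \<ge> 1 - exp (- \<sigma>))
       \<and> (\<exists>C R0. C > 0 \<and> R0 > 0 \<and>
            (\<forall>z::complex. \<bar>Re z\<bar> < \<sigma> \<and> cmod z \<ge> R0 \<longrightarrow>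
               cmod (exp z - 1) \<ge> \<bar>sin (cmod z)\<bar> * indicator setJ (cmod z)
                                   + indicator (- setJ) (cmod z) - C / cmod z))"
proof (intro conjI exI allI impI)
  show "\<And>z. \<sigma> \<le> \<bar>Re z\<bar> \<Longrightarrow> 1 - exp (- \<sigma>) \<le> cmod (exp z - 1)"
    by (rule norm_exp_minus_one_ge_of_abs_Re)
  show "\<sigma>\<^sup>2 > 0" "(1::real) > 0"
    using assms by simp_all
  fix z :: complex
  assume z: "\<bar>Re z\<bar> < \<sigma> \<and> 1 \<le> cmod z"
  then have "(Re z)\<^sup>2 / cmod z \<le> \<sigma>\<^sup>2 / cmod z"
    using assms by (intro divide_right_mono) (auto simp: power2_le_iff_abs_le)
  with z norm_exp_minus_one_ge_setJ_bound[of z]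
  show "\<bar>sin (cmod z)\<bar> * indicator setJ (cmod z) + indicator (- setJ) (cmod z)
          - \<sigma>\<^sup>2 / cmod z \<le> cmod (exp z - 1)"
    by force
qed

end
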